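(* Let $X$ be a real Banach space and $Y$ a finite dimensional real Banach space. The following are equivalent: (1) for every finite dimensional subspace $Z$ of $X$ and every $\varepsilon>0$ there is an operator $T\in L(Y,X)$ with $\|T\|=1$ such that $\|z+T(y)\|\ge(1-\varepsilon)(\|z\|+\|y\|)$ for all $y\in Y$, $z\in Z$; (2) for every finite sets $\{z_1,\dots,z_n\}\subseteq S_X$, $\{y_1,\dots,y_m\}\subseteq S_Y$ and every $\varepsilon>0$ there is an operator $T\in L(Y,X)$ with $\|T\|=1$ such that $\|z_i+T(y_j)\|>2-\varepsilon$ for all $1\le i\le n$, $1\le j\le m$.
   Context: $S_W$ denotes the unit sphere of a Banach space $W$; $L(Y,X)$ is the space of bounded linear operators from $Y$ to $X$ with the operator norm. *)

theory Defs
  imports "HOL-Analysis.Analysis"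
begin

definition fin_dim_subspace :: "'a::real_vector set \<Rightarrow> bool" where
  "fin_dim_subspace Z \<longleftrightarrow> subspace Z \<and> (\<exists>B. finite B \<and> span B = Z)"

end

theory Submission imports Defs begin

text \<open>(1) \<open>\<Longrightarrow>\<close> (2) is immediate with \<open>Z = span A\<close>. For the converse, the unit spheres of a
  finite-dimensional subspace \<open>Z\<close> and of \<open>Y\<close> are compact, so a contraction \<open>T\<close> with
  \<open>\<parallel>x + T y\<parallel> > 2 - d\<close> on finite \<open>d\<close>-nets of them satisfies \<open>\<parallel>x + T y\<parallel> \<ge> 2 - 3d\<close> on the whole
  spheres. Finally, \<open>\<parallel>x\<parallel> = 1\<close>, \<open>\<parallel>v\<parallel> \<le> 1\<close> and \<open>\<parallel>x + v\<parallel> \<ge> 2 - \<epsilon>\<close> give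
  \<open>\<parallel>a x + b v\<parallel> \<ge> (1 - \<epsilon>)(a + b)\<close> for \<open>a, b \<ge> 0\<close>, which turns the bound on spheres into the
  estimate on \<open>Z\<close>. Compactness of finite-dimensional spheres is proved by induction on a spanning
  set: a vector outside the (closed) span of the others has positive distance to it.\<close>

lemma closed_sphere_metric: "closed (sphere (a::'a::metric_space) r)"
proof -
  have "sphere a r = cball a r - ball a r" by auto
  then show ?thesis by (simp add: closed_Diff)
qed

lemma closed_if_compact_Int_cball:
  fixes S :: "'a::real_normed_vector set"
  assumes "\<And>R. compact (S \<inter> cball 0 R)"
  shows "closed S"
proof -
  have "x \<in> S" if "x \<in> closure S" for x
  proof -
    let ?C = "S \<inter> cball 0 (norm x + 1)"
    have "x \<in> ball 0 (norm x + 1) \<inter> closure S" using that by simp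
    also have "\<dots> \<subseteq> closure (ball 0 (norm x + 1) \<inter> S)" by (simp add: open_Int_closure_subset)
    also have "\<dots> \<subseteq> closure ?C" by (intro closure_mono) auto
    also have "\<dots> = ?C" using assms compact_imp_closed closure_closed by blast
    finally show ?thesis by blast
  qed
  then show ?thesis using closure_subset_eq closure_subset by blast
qed

lemma infdist_scaleR_le_norm_add:
  fixes b :: "'a::real_normed_vector"
  assumes "subspace V" "s \<in> V"
  shows "\<bar>t\<bar> * infdist b V \<le> norm (s + t *\<^sub>R b)"
proof (cases "t = 0")
  case False
  have "-(1/t) *\<^sub>R s \<in> V" using assms subspace_scale by blast
  then have "infdist b V \<le> dist b (-(1/t) *\<^sub>R s)" by (rule infdist_le)
  also have "\<dots> = norm ((1/t) *\<^sub>R (s + t *\<^sub>R b))"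
    using False by (simp add: dist_norm algebra_simps)
  also have "\<dots> = norm (s + t *\<^sub>R b) / \<bar>t\<bar>" by simp
  finally show ?thesis using False by (simp add: field_simps)
qed simp

lemma compact_span_Int_cball:
  fixes S :: "'a::real_normed_vector set"
  assumes "finite S"
  shows "compact (span S \<inter> cball 0 R)"
  using assms
proof (induction S arbitrary: R rule: finite_induct)
  case empty
  show ?case by (auto intro: finite_imp_compact finite_subset[of _ "{0}"])
next
  case (insert b S)
  show ?case
  proof (cases "b \<in> span S")
    case True
    then show ?thesis using insert.IH by (simp add: span_redundant)
  next
    case False
    have "closed (span S)" by (rule closed_if_compact_Int_cball) (rule insert.IH)
    then have d: "infdist b (span S) > 0"
      using infdist_pos_not_in_closed False span_zero by blast
    define r where "r = R / infdist b (span S)"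
    let ?K = "(\<lambda>(s, t). s + t *\<^sub>R b) ` ((span S \<inter> cball 0 (R + r * norm b)) \<times> {-r..r})"
    have "span (insert b S) \<inter> cball 0 R \<subseteq> ?K"
    proof
      fix x assume x: "x \<in> span (insert b S) \<inter> cball 0 R"
      then obtain t where s: "x - t *\<^sub>R b \<in> span S" using span_breakdown_eq by blast
      have "\<bar>t\<bar> * infdist b (span S) \<le> R"
        using infdist_scaleR_le_norm_add[OF subspace_span s, of t b] x by simp
      then have t: "\<bar>t\<bar> \<le> r" using d by (simp add: r_def field_simps)
      have "norm (x - t *\<^sub>R b) \<le> norm x + \<bar>t\<bar> * norm b"
        using norm_triangle_ineq4[of x "t *\<^sub>R b"] by simp
      also have "\<dots> \<le> R + r * norm b" using x t by (intro add_mono mult_right_mono) auto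
      finally show "x \<in> ?K"
        using s t by (auto intro!: image_eqI[of _ _ "(x - t *\<^sub>R b, t)"])
    qed
    moreover have "?K \<subseteq> span (insert b S)"
      by (auto intro: span_add span_mono[THEN subsetD, of S] span_mul span_base)
    moreover have "compact ?K"
      by (intro compact_continuous_image continuous_intros compact_Times insert.IH compact_Icc)
         (auto simp: case_prod_unfold intro!: continuous_intros)
    ultimately have "span (insert b S) \<inter> cball 0 R = ?K \<inter> cball 0 R" by blast
    then show ?thesis using \<open>compact ?K\<close> by (simp add: compact_Int_closed)
  qed
qed

lemma compact_span_Int_sphere:
  fixes S :: "'a::real_normed_vector set"
  assumes "finite S"
  shows "compact (span S \<inter> sphere 0 1)"
proof -
  have "span S \<inter> sphere 0 1 = (span S \<inter> cball 0 1) \<inter> sphere 0 1" by auto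
  then show ?thesis
    by (simp add: compact_Int_closed compact_span_Int_cball[OF assms] closed_sphere_metric)
qed

lemma norm_add_blinfun_ge_perturb:
  fixes T :: "'b::real_normed_vector \<Rightarrow>\<^sub>L 'a::real_normed_vector"
  assumes "norm T \<le> 1"
  shows "norm (x + blinfun_apply T y) \<ge> norm (x' + blinfun_apply T y') - dist x x' - dist y y'"
proof -
  have "norm (blinfun_apply T y - blinfun_apply T y') \<le> norm T * norm (y - y')"
    by (metis blinfun.diff_right norm_blinfun)
  also have "\<dots> \<le> dist y y'"
    using assms by (simp add: dist_norm mult_left_le_one_le)
  finally have "norm (blinfun_apply T y - blinfun_apply T y') \<le> dist y y'" .
  moreover have "norm (x' + blinfun_apply T y')
      \<le> norm (x + blinfun_apply T y - (x - x')) + norm (blinfun_apply T y - blinfun_apply T y')"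
    using norm_triangle_ineq4[of "x + blinfun_apply T y - (x - x')"
        "blinfun_apply T y - blinfun_apply T y'"] by (simp add: algebra_simps)
  moreover have "norm (x + blinfun_apply T y - (x - x')) \<le> norm (x + blinfun_apply T y) + dist x x'"
    unfolding dist_norm by (rule norm_triangle_ineq4)
  ultimately show ?thesis by linarith
qed

lemma bound_norm_add_blinfun_on_compacts:
  fixes K :: "'a::real_normed_vector set" and L :: "'b::real_normed_vector set"
  assumes "compact K" "compact L" "d > 0"
    and finite_sets: "\<And>N M. finite N \<Longrightarrow> N \<subseteq> K \<Longrightarrow> finite M \<Longrightarrow> M \<subseteq> L \<Longrightarrow>
      \<exists>T::'b \<Rightarrow>\<^sub>L 'a. norm T = 1 \<and> (\<forall>x\<in>N. \<forall>y\<in>M. norm (x + blinfun_apply T y) > 2 - d)"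
  shows "\<exists>T::'b \<Rightarrow>\<^sub>L 'a. norm T = 1 \<and> (\<forall>x\<in>K. \<forall>y\<in>L. norm (x + blinfun_apply T y) \<ge> 2 - 3 * d)"
proof -
  obtain N where N: "finite N" "N \<subseteq> K" "K \<subseteq> (\<Union>x\<in>N. ball x d)"
    using seq_compact_imp_totally_bounded[OF compact_imp_seq_compact[OF assms(1)], rule_format,
        OF assms(3)] by blast
  obtain M where M: "finite M" "M \<subseteq> L" "L \<subseteq> (\<Union>y\<in>M. ball y d)"
    using seq_compact_imp_totally_bounded[OF compact_imp_seq_compact[OF assms(2)], rule_format,
        OF assms(3)] by blast
  obtain T :: "'b \<Rightarrow>\<^sub>L 'a" where T: "norm T = 1"
    and net: "\<forall>x\<in>N. \<forall>y\<in>M. norm (x + blinfun_apply T y) > 2 - d"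
    using finite_sets[OF N(1,2) M(1,2)] by blast
  have "norm (x + blinfun_apply T y) \<ge> 2 - 3 * d" if "x \<in> K" "y \<in> L" for x y
  proof -
    obtain x' where x': "x' \<in> N" "dist x' x < d" using N(3) \<open>x \<in> K\<close> by auto
    obtain y' where y': "y' \<in> M" "dist y' y < d" using M(3) \<open>y \<in> L\<close> by auto
    have "norm (x' + blinfun_apply T y') > 2 - d" using net x'(1) y'(1) by blast
    then show ?thesis
      using norm_add_blinfun_ge_perturb[of T x' y' x y] T x'(2) y'(2) by (simp add: dist_commute)
  qed
  then show ?thesis using T by blast
qed

lemma norm_scaleR_add_ge:
  fixes x v :: "'a::real_normed_vector"
  assumes "norm x = 1" "norm v \<le> 1" "norm (x + v) \<ge> 2 - e" "a \<ge> 0" "b \<ge> 0" "e \<ge> 0"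
  shows "norm (a *\<^sub>R x + b *\<^sub>R v) \<ge> (1 - e) * (a + b)"
proof (cases "a \<ge> b")
  case True
  have "a *\<^sub>R x + b *\<^sub>R v = a *\<^sub>R (x + v) - (a - b) *\<^sub>R v" by (simp add: algebra_simps)
  then have "norm (a *\<^sub>R x + b *\<^sub>R v) \<ge> norm (a *\<^sub>R (x + v)) - norm ((a - b) *\<^sub>R v)"
    by (metis norm_triangle_ineq2)
  moreover have "norm (a *\<^sub>R (x + v)) \<ge> a * (2 - e)" using assms by (simp add: mult_left_mono)
  moreover have "norm ((a - b) *\<^sub>R v) \<le> a - b" using assms True by (simp add: mult_left_le)
  moreover have "b * e \<ge> 0" using assms by simp
  ultimately show ?thesis by (simp add: algebra_simps)
next
  case False
  have "a *\<^sub>R x + b *\<^sub>R v = b *\<^sub>R (x + v) - (b - a) *\<^sub>R x" by (simp add: algebra_simps)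
  then have "norm (a *\<^sub>R x + b *\<^sub>R v) \<ge> norm (b *\<^sub>R (x + v)) - norm ((b - a) *\<^sub>R x)"
    by (metis norm_triangle_ineq2)
  moreover have "norm (b *\<^sub>R (x + v)) \<ge> b * (2 - e)" using assms by (simp add: mult_left_mono)
  moreover have "norm ((b - a) *\<^sub>R x) = b - a" using assms False by simp
  moreover have "a * e \<ge> 0" using assms by simp
  ultimately show ?thesis by (simp add: algebra_simps)
qed

text \<open>The extra unit vector \<open>x\<^sub>0\<close> handles \<open>z = 0\<close>, where \<open>Z\<close> may contain no unit vector.\<close>
lemma norm_add_blinfun_ge_from_spheres:
  fixes T :: "'b::real_normed_vector \<Rightarrow>\<^sub>L 'a::real_normed_vector"
  assumes "norm T \<le> 1" "e \<ge> 0" "subspace Z" "norm x\<^sub>0 = 1" "z \<in> Z"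
    and sph: "\<And>x y. x \<in> insert x\<^sub>0 (Z \<inter> sphere 0 1) \<Longrightarrow> norm y = 1 \<Longrightarrow>
      norm (x + blinfun_apply T y) \<ge> 2 - e"
  shows "norm (z + blinfun_apply T y) \<ge> (1 - e) * (norm z + norm y)"
proof (cases "y = 0")
  case True
  have "e * norm z \<ge> 0" using assms(2) by simp
  then show ?thesis using True by (simp add: algebra_simps)
next
  case False
  define x where "x = (if z = 0 then x\<^sub>0 else sgn z)"
  have x: "x \<in> insert x\<^sub>0 (Z \<inter> sphere 0 1)" "norm x = 1"
    using assms(3-5) by (auto simp: x_def sgn_div_norm norm_sgn subspace_scale)
  have z: "z = norm z *\<^sub>R x" by (simp add: x_def sgn_div_norm)
  have Ty: "blinfun_apply T y = norm y *\<^sub>R blinfun_apply T (sgn y)"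
    using False by (simp add: sgn_div_norm blinfun.scaleR_right)
  have "norm (blinfun_apply T (sgn y)) \<le> 1"
    using norm_blinfun[of T "sgn y"] assms(1) False by (simp add: norm_sgn)
  moreover have "norm (x + blinfun_apply T (sgn y)) \<ge> 2 - e"
    using sph[OF x(1)] False by (simp add: norm_sgn)
  ultimately have "norm (norm z *\<^sub>R x + norm y *\<^sub>R blinfun_apply T (sgn y))
      \<ge> (1 - e) * (norm z + norm y)"
    using norm_scaleR_add_ge[OF x(2)] assms(2) by simp
  then show ?thesis using z Ty by metis
qed

lemma l1_bound_on_subspace_if_bound_on_finite_spheres:
  fixes Z :: "'a::real_normed_vector set" and x\<^sub>0 :: 'a
  assumes finY: "\<exists>B::'b::real_normed_vector set. finite B \<and> span B = UNIV"
    and Z: "fin_dim_subspace Z" and e: "e > 0" and x\<^sub>0: "norm x\<^sub>0 = 1"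
    and finite_spheres: "\<And>A B. finite A \<Longrightarrow> A \<subseteq> sphere 0 1 \<Longrightarrow>
      finite B \<Longrightarrow> B \<subseteq> sphere 0 1 \<Longrightarrow>
      \<exists>T::'b \<Rightarrow>\<^sub>L 'a. norm T = 1 \<and> (\<forall>z\<in>A. \<forall>y\<in>B. norm (z + blinfun_apply T y) > 2 - e / 3)"
  shows "\<exists>T::'b \<Rightarrow>\<^sub>L 'a. norm T = 1 \<and>
    (\<forall>y z. z \<in> Z \<longrightarrow> norm (z + blinfun_apply T y) \<ge> (1 - e) * (norm z + norm y))"
proof -
  obtain BZ where BZ: "finite BZ" "span BZ = Z" using Z fin_dim_subspace_def by blast
  obtain BY :: "'b set" where BY: "finite BY" "span BY = UNIV" using finY by blast
  let ?K = "insert x\<^sub>0 (Z \<inter> sphere 0 1)"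
  have K: "compact ?K" using compact_span_Int_sphere[OF BZ(1)] BZ(2) by simp
  have S: "compact (sphere (0::'b) 1)" using compact_span_Int_sphere[OF BY(1)] BY(2) by simp
  have "\<exists>T::'b \<Rightarrow>\<^sub>L 'a. norm T = 1 \<and>
      (\<forall>x\<in>?K. \<forall>y\<in>sphere 0 1. norm (x + blinfun_apply T y) \<ge> 2 - 3 * (e / 3))"
  proof (rule bound_norm_add_blinfun_on_compacts[OF K S])
    show "e / 3 > 0" using e by simp
    fix N :: "'a set" and M :: "'b set"
    assume N: "finite N" "N \<subseteq> ?K" and M: "finite M" "M \<subseteq> sphere 0 1"
    have "N \<subseteq> sphere 0 1" using N(2) x\<^sub>0 by auto
    then show "\<exists>T::'b \<Rightarrow>\<^sub>L 'a. norm T = 1 \<and>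
        (\<forall>x\<in>N. \<forall>y\<in>M. norm (x + blinfun_apply T y) > 2 - e / 3)"
      by (rule finite_spheres[OF N(1) _ M])
  qed
  then obtain T :: "'b \<Rightarrow>\<^sub>L 'a" where T: "norm T = 1"
    and bound: "\<forall>x\<in>?K. \<forall>y\<in>sphere 0 1. norm (x + blinfun_apply T y) \<ge> 2 - 3 * (e / 3)"
    by blast
  have sph: "norm (x + blinfun_apply T y) \<ge> 2 - e" if "x \<in> ?K" "norm y = 1" for x y
    using bspec[OF bspec[OF bound that(1)], of y] that(2) by simp
  have "subspace Z" using BZ(2) subspace_span by blast
  then have "norm (z + blinfun_apply T y) \<ge> (1 - e) * (norm z + norm y)" if "z \<in> Z" for y z
    using norm_add_blinfun_ge_from_spheres[OF _ _ _ x\<^sub>0 that sph] T e by simp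
  then show ?thesis using T by blast
qed

theorem mainTheorem2:
  fixes X_witness :: "'a::banach" and Y_witness :: "'b::banach"
  assumes finY: "\<exists>B::'b set. finite B \<and> span B = UNIV"
  shows "(\<forall>Z::'a set. \<forall>\<epsilon>>0. fin_dim_subspace Z \<longrightarrow>
            (\<exists>T::'b \<Rightarrow>\<^sub>L 'a. norm T = 1 \<and>
               (\<forall>y z. z \<in> Z \<longrightarrow> norm (z + blinfun_apply T y) \<ge> (1 - \<epsilon>) * (norm z + norm y))))
     \<longleftrightarrow>
         (\<forall>A::'a set. \<forall>B::'b set. \<forall>\<epsilon>>0.
            finite A \<and> A \<subseteq> sphere 0 1 \<and> finite B \<and> B \<subseteq> sphere 0 1 \<longrightarrow>
            (\<exists>T::'b \<Rightarrow>\<^sub>L 'a. norm T = 1 \<and>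
               (\<forall>z\<in>A. \<forall>y\<in>B. norm (z + blinfun_apply T y) > 2 - \<epsilon>)))"
  (is "?subspaces \<longleftrightarrow> ?spheres")
proof
  assume subspaces: ?subspaces
  show ?spheres
  proof (intro allI impI)
    fix A :: "'a set" and B :: "'b set" and e :: real
    assume "e > 0" and AB: "finite A \<and> A \<subseteq> sphere 0 1 \<and> finite B \<and> B \<subseteq> sphere 0 1"
    then obtain T :: "'b \<Rightarrow>\<^sub>L 'a" where T: "norm T = 1"
      "\<And>y z. z \<in> span A \<Longrightarrow> norm (z + blinfun_apply T y) \<ge> (1 - e / 4) * (norm z + norm y)"
      using subspaces[rule_format, of "e / 4" "span A"] by (auto simp: fin_dim_subspace_def)
    have "norm (z + blinfun_apply T y) > 2 - e" if "z \<in> A" "y \<in> B" for z y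
    proof -
      have "norm z + norm y = 2" using that AB unfolding subset_iff by simp
      then show ?thesis using T(2)[OF span_base[OF \<open>z \<in> A\<close>], of y] \<open>e > 0\<close> by simp
    qed
    then show "\<exists>T::'b \<Rightarrow>\<^sub>L 'a. norm T = 1 \<and>
        (\<forall>z\<in>A. \<forall>y\<in>B. norm (z + blinfun_apply T y) > 2 - e)"
      using T(1) by blast
  qed
next
  assume spheres: ?spheres
  \<comment> \<open>the case \<open>A = B = {}\<close> yields a norm-one operator, hence a unit vector of \<open>X\<close>\<close>
  obtain T\<^sub>0 :: "'b \<Rightarrow>\<^sub>L 'a" where "norm T\<^sub>0 = 1" using spheres[rule_format, of 1 "{}" "{}"] by auto
  then obtain y\<^sub>0 where "blinfun_apply T\<^sub>0 y\<^sub>0 \<noteq> 0"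
    by (metis blinfun_eqI norm_zero zero_blinfun.rep_eq zero_neq_one)
  then have x\<^sub>0: "norm (sgn (blinfun_apply T\<^sub>0 y\<^sub>0)) = 1" by (simp add: norm_sgn)
  show ?subspaces
  proof (intro allI impI)
    fix Z :: "'a set" and e :: real
    assume "e > 0" "fin_dim_subspace Z"
    moreover have "e / 3 > 0" using \<open>e > 0\<close> by simp
    ultimately show "\<exists>T::'b \<Rightarrow>\<^sub>L 'a. norm T = 1 \<and>
        (\<forall>y z. z \<in> Z \<longrightarrow> norm (z + blinfun_apply T y) \<ge> (1 - e) * (norm z + norm y))"
      using l1_bound_on_subspace_if_bound_on_finite_spheres[OF finY _ _ x\<^sub>0] spheres by blast
  qed
qed

end
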